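(* Let $\Phi,\Psi,S,T$ be finite sets and let $(s,t,\varphi,\psi)$ be random variables with values in $S\times T\times\Phi\times\Psi$ such that $\varphi$ and $\psi$ are independent and the signals are entangled. Then for any $\varphi_1,\varphi_2\in\Phi$ with positive probability and any $t\in T$, $p(t\mid\varphi_1)=p(t\mid\varphi_2)$; indeed $p(t\mid\varphi)=p(t)$.
   Context: A joint distribution of $(s,t,\varphi,\psi)$ is disjoint if $\Pr\{\psi\mid\varphi,s\}=\Pr\{\psi\mid\varphi\}$ and $\Pr\{\varphi\mid\psi,t\}=\Pr\{\varphi\mid\psi\}$ (whenever the conditioning events have positive probability); classically generated if there exists a random variable $x$ independent of $(\varphi,\psi)$ such that $p(s,t\mid x,\varphi,\psi)=p(s\mid x,\varphi)\,p(t\mid x,\psi)$; entangled if it is disjoint and not classically generated. Here $\varphi,\psi$ are the players' states of nature and $s,t$ their signals. *)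

theory Defs
  imports "HOL-Probability.Probability_Mass_Function"
begin

text \<open>Probability of an event given by a predicate, and conditional probability
  (ratio; only used when the conditioning event has positive probability).\<close>
definition Pr :: "'w pmf \<Rightarrow> ('w \<Rightarrow> bool) \<Rightarrow> real" where
  "Pr D E = measure_pmf.prob D {w. E w}"

definition cPr :: "'w pmf \<Rightarrow> ('w \<Rightarrow> bool) \<Rightarrow> ('w \<Rightarrow> bool) \<Rightarrow> real" where
  "cPr D E C = Pr D (\<lambda>w. E w \<and> C w) / Pr D C"

definition sig_s :: "'s \<times> 't \<times> 'f \<times> 'g \<Rightarrow> 's" where "sig_s w = fst w"
definition sig_t :: "'s \<times> 't \<times> 'f \<times> 'g \<Rightarrow> 't" where "sig_t w = fst (snd w)"
definition st_phi :: "'s \<times> 't \<times> 'f \<times> 'g \<Rightarrow> 'f" where "st_phi w = fst (snd (snd w))"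
definition st_psi :: "'s \<times> 't \<times> 'f \<times> 'g \<Rightarrow> 'g" where "st_psi w = snd (snd (snd w))"

definition disjoint_dist :: "('s \<times> 't \<times> 'f \<times> 'g) pmf \<Rightarrow> bool" where
  "disjoint_dist D \<longleftrightarrow>
     (\<forall>s a b. Pr D (\<lambda>w. st_phi w = a \<and> sig_s w = s) > 0 \<longrightarrow>
        cPr D (\<lambda>w. st_psi w = b) (\<lambda>w. st_phi w = a \<and> sig_s w = s)
        = cPr D (\<lambda>w. st_psi w = b) (\<lambda>w. st_phi w = a)) \<and>
     (\<forall>t a b. Pr D (\<lambda>w. st_psi w = b \<and> sig_t w = t) > 0 \<longrightarrow>
        cPr D (\<lambda>w. st_phi w = a) (\<lambda>w. st_psi w = b \<and> sig_t w = t)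
        = cPr D (\<lambda>w. st_phi w = a) (\<lambda>w. st_psi w = b))"

text \<open>Classically generated: there is a random variable x (here nat-valued, jointly
  distributed with (s,t,phi,psi) via a pmf Q whose marginal is D) independent of
  (phi,psi) with p(s,t | x,phi,psi) = p(s | x,phi) p(t | x,psi).\<close>
definition classically_generated :: "('s \<times> 't \<times> 'f \<times> 'g) pmf \<Rightarrow> bool" where
  "classically_generated D \<longleftrightarrow>
     (\<exists>Q :: (nat \<times> ('s \<times> 't \<times> 'f \<times> 'g)) pmf.
        map_pmf snd Q = D \<and>
        (\<forall>x a b. Pr Q (\<lambda>(y, w). y = x \<and> st_phi w = a \<and> st_psi w = b)
                 = Pr Q (\<lambda>(y, w). y = x) * Pr Q (\<lambda>(y, w). st_phi w = a \<and> st_psi w = b)) \<and>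
        (\<forall>x a b s t. Pr Q (\<lambda>(y, w). y = x \<and> st_phi w = a \<and> st_psi w = b) > 0 \<longrightarrow>
           cPr Q (\<lambda>(y, w). sig_s w = s \<and> sig_t w = t)
                 (\<lambda>(y, w). y = x \<and> st_phi w = a \<and> st_psi w = b)
           = cPr Q (\<lambda>(y, w). sig_s w = s) (\<lambda>(y, w). y = x \<and> st_phi w = a)
             * cPr Q (\<lambda>(y, w). sig_t w = t) (\<lambda>(y, w). y = x \<and> st_psi w = b)))"

definition entangled :: "('s \<times> 't \<times> 'f \<times> 'g) pmf \<Rightarrow> bool" where
  "entangled D \<longleftrightarrow> disjoint_dist D \<and> \<not> classically_generated D"

end

theory Submission
  imports Defs
begin

text \<open>Disjointness says that, given \<open>\<psi>\<close>, the signal \<open>t\<close> carries no further information about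
  \<open>\<phi>\<close>; together with the independence of \<open>\<phi>\<close> and \<open>\<psi>\<close> this makes \<open>\<phi>\<close> independent of the pair
  \<open>(\<psi>, t)\<close>, and summing over \<open>\<psi>\<close> makes it independent of \<open>t\<close>.\<close>

lemma Pr_nonneg: "Pr D E \<ge> 0"
  unfolding Pr_def by simp

lemma Pr_mono:
  assumes "\<And>w. E w \<Longrightarrow> F w"
  shows "Pr D E \<le> Pr D F"
  unfolding Pr_def using assms by (intro measure_pmf.finite_measure_mono) auto

lemma sum_Pr_fibres:
  fixes f :: "'w \<Rightarrow> 'b::finite"
  shows "(\<Sum>b\<in>UNIV. Pr D (\<lambda>w. P w \<and> f w = b)) = Pr D P"
proof -
  have "{w. P w} = (\<Union>b\<in>UNIV. {w. P w \<and> f w = b})"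
    by auto
  then have "Pr D P = measure_pmf.prob D (\<Union>b\<in>UNIV. {w. P w \<and> f w = b})"
    unfolding Pr_def by simp
  also have "\<dots> = (\<Sum>b\<in>UNIV. measure_pmf.prob D {w. P w \<and> f w = b})"
    by (rule measure_pmf.finite_measure_finite_Union) (auto simp: disjoint_family_on_def)
  finally show ?thesis
    unfolding Pr_def by simp
qed

lemma cPr_eq_Pr_if_indep:
  assumes "Pr D (\<lambda>w. E w \<and> C w) = Pr D E * Pr D C" and "Pr D C > 0"
  shows "cPr D E C = Pr D E"
  using assms unfolding cPr_def by simp

lemma Pr_indep_conj_if_cPr_eq:
  assumes cond: "Pr D (\<lambda>w. B w \<and> T w) > 0 \<Longrightarrow> cPr D A (\<lambda>w. B w \<and> T w) = cPr D A B"
    and indep: "Pr D (\<lambda>w. A w \<and> B w) = Pr D A * Pr D B"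
  shows "Pr D (\<lambda>w. A w \<and> B w \<and> T w) = Pr D A * Pr D (\<lambda>w. B w \<and> T w)"
proof (cases "Pr D (\<lambda>w. B w \<and> T w) > 0")
  case True
  moreover have "Pr D B > 0"
    using True Pr_mono[of "\<lambda>w. B w \<and> T w" B D] by linarith
  ultimately have "Pr D (\<lambda>w. A w \<and> B w \<and> T w) / Pr D (\<lambda>w. B w \<and> T w) = Pr D A"
    using cond cPr_eq_Pr_if_indep[OF indep] unfolding cPr_def by simp
  with True show ?thesis
    by (simp add: field_simps)
next
  case False
  then have "Pr D (\<lambda>w. B w \<and> T w) = 0"
    using Pr_nonneg[of D "\<lambda>w. B w \<and> T w"] by linarith
  moreover have "Pr D (\<lambda>w. A w \<and> B w \<and> T w) \<le> Pr D (\<lambda>w. B w \<and> T w)"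
    by (rule Pr_mono) simp
  ultimately show ?thesis
    using Pr_nonneg[of D "\<lambda>w. A w \<and> B w \<and> T w"] by simp
qed

lemma disjoint_dist_sig_t_indep_phi:
  fixes D :: "('s \<times> 't \<times> 'f \<times> 'g::finite) pmf"
  assumes indep: "\<forall>a b. Pr D (\<lambda>w. st_phi w = a \<and> st_psi w = b)
                        = Pr D (\<lambda>w. st_phi w = a) * Pr D (\<lambda>w. st_psi w = b)"
    and disj: "disjoint_dist D"
  shows "Pr D (\<lambda>w. sig_t w = t \<and> st_phi w = a)
       = Pr D (\<lambda>w. sig_t w = t) * Pr D (\<lambda>w. st_phi w = a)"
proof -
  have phi_psi_t: "Pr D (\<lambda>w. st_phi w = a \<and> st_psi w = b \<and> sig_t w = t)
      = Pr D (\<lambda>w. st_phi w = a) * Pr D (\<lambda>w. st_psi w = b \<and> sig_t w = t)" for b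
    using disj indep unfolding disjoint_dist_def by (intro Pr_indep_conj_if_cPr_eq) blast+
  have "Pr D (\<lambda>w. sig_t w = t \<and> st_phi w = a)
      = (\<Sum>b\<in>UNIV. Pr D (\<lambda>w. (sig_t w = t \<and> st_phi w = a) \<and> st_psi w = b))"
    by (rule sum_Pr_fibres[symmetric])
  also have "\<dots> = (\<Sum>b\<in>UNIV. Pr D (\<lambda>w. st_phi w = a) * Pr D (\<lambda>w. sig_t w = t \<and> st_psi w = b))"
    by (intro sum.cong refl) (simp add: phi_psi_t[symmetric] conj_ac)
  also have "\<dots> = Pr D (\<lambda>w. st_phi w = a) * Pr D (\<lambda>w. sig_t w = t)"
    by (simp add: sum_distrib_left[symmetric] sum_Pr_fibres)
  finally show ?thesis
    by simp
qed

theorem lemma3: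
  fixes D :: "('s::finite \<times> 't::finite \<times> 'f::finite \<times> 'g::finite) pmf"
  assumes indep: "\<forall>a b. Pr D (\<lambda>w. st_phi w = a \<and> st_psi w = b)
                        = Pr D (\<lambda>w. st_phi w = a) * Pr D (\<lambda>w. st_psi w = b)"
    and ent: "entangled D"
  shows "(\<forall>a1 a2 t. Pr D (\<lambda>w. st_phi w = a1) > 0 \<longrightarrow> Pr D (\<lambda>w. st_phi w = a2) > 0 \<longrightarrow>
            cPr D (\<lambda>w. sig_t w = t) (\<lambda>w. st_phi w = a1)
            = cPr D (\<lambda>w. sig_t w = t) (\<lambda>w. st_phi w = a2)) \<and>
         (\<forall>a t. Pr D (\<lambda>w. st_phi w = a) > 0 \<longrightarrow>
            cPr D (\<lambda>w. sig_t w = t) (\<lambda>w. st_phi w = a) = Pr D (\<lambda>w. sig_t w = t))"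
proof -
  have "disjoint_dist D"
    using ent unfolding entangled_def by simp
  then have marginal: "cPr D (\<lambda>w. sig_t w = t) (\<lambda>w. st_phi w = a) = Pr D (\<lambda>w. sig_t w = t)"
    if "Pr D (\<lambda>w. st_phi w = a) > 0" for a t
    using that indep by (intro cPr_eq_Pr_if_indep disjoint_dist_sig_t_indep_phi)
  then show ?thesis
    by simp
qed

end
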